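(* Let $\alpha,\beta,\gamma,x$ be non-negative integers with $(\alpha,\beta,\gamma,x)\neq(0,0,0,0)$. Then for every integer $n\ge0$, $$T_{n+1}^{1,x}(\alpha,\beta,\gamma)=\gamma\,T_n^{1,x}(\alpha,\beta,\gamma-\alpha)+x\beta\sum_{k=0}^{n}\binom{n}{k}T_k^{1,x}(\alpha,\beta,\gamma+\beta-\alpha)\,T_{n-k}^{1,x}(\alpha,\beta,0).$$
   Context: For complex numbers $c,\alpha$ and an integer $n\ge 0$ let $(c|\alpha)_n=\prod_{i=0}^{n-1}(c-i\alpha)$, with $(c|\alpha)_0=1$. Let $E_{\alpha,c}(t)=\sum_{n\ge 0}(c|\alpha)_n\,t^n/n!$, viewed as a formal power series in $t$. It equals $(1+\alpha t)^{c/\alpha}$ if $\alpha\neq0$ and $e^{ct}$ if $\alpha=0$. For complex $\alpha,\beta,\gamma,x$ and a non-negative integer $\lambda$, the numbers $T_n^{\lambda,x}(\alpha,\beta,\gamma)$, $n\ge0$, are defined by the formal power series identity $$\sum_{n\ge0}T_n^{\lambda,x}(\alpha,\beta,\gamma)\frac{t^n}{n!}=E_{\alpha,\gamma}(t)\,\bigl(1-x(E_{\alpha,\beta}(t)-1)\bigr)^{-\lambda}.$$ The third argument may be any complex number. *)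

theory Defs
  imports Complex_Main "HOL-Computational_Algebra.Formal_Power_Series"
begin

definition gfall :: "complex \<Rightarrow> complex \<Rightarrow> nat \<Rightarrow> complex" where
  "gfall c \<alpha> n = (\<Prod>i<n. c - of_nat i * \<alpha>)"

definition Efps :: "complex \<Rightarrow> complex \<Rightarrow> complex fps" where
  "Efps \<alpha> c = Abs_fps (\<lambda>n. gfall c \<alpha> n / fact n)"

text \<open>The base has constant term 1, so its inverse is the usual fps inverse.\<close>
definition Tgf :: "nat \<Rightarrow> complex \<Rightarrow> complex \<Rightarrow> complex \<Rightarrow> complex \<Rightarrow> complex fps" where
  "Tgf lam x \<alpha> \<beta> \<gamma> = Efps \<alpha> \<gamma> * inverse ((1 - fps_const x * (Efps \<alpha> \<beta> - 1)) ^ lam)"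

definition T :: "nat \<Rightarrow> complex \<Rightarrow> nat \<Rightarrow> complex \<Rightarrow> complex \<Rightarrow> complex \<Rightarrow> complex" where
  "T lam x n \<alpha> \<beta> \<gamma> = fact n * fps_nth (Tgf lam x \<alpha> \<beta> \<gamma>) n"

end

theory Submission
  imports Defs
begin

unbundle fps_syntax

text \<open>
  Write \<open>E c\<close> for \<open>E(\<alpha>, c)\<close> and \<open>D = 1 - x (E \<beta> - 1)\<close>, so that the exponential
  generating function of \<open>T\<^sup>1\<^sup>,\<^sup>x(\<alpha>, \<beta>, \<gamma>)\<close> is \<open>E \<gamma> / D\<close>. From \<open>(E c)' = c E (c - \<alpha>)\<close>,
  \<open>E b \<cdot> E c = E (b + c)\<close> and \<open>E 0 = 1\<close> one gets
  \<open>(E \<gamma> / D)' = \<gamma> E (\<gamma> - \<alpha>) / D + x \<beta> (E (\<gamma> + \<beta> - \<alpha>) / D) (E 0 / D)\<close>,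
  and comparing coefficients gives the recurrence for arbitrary complex parameters.
\<close>

lemma fact_Suc_mult_fps_nth:
  fixes f :: "'a::{comm_ring_1,semiring_char_0} fps"
  shows "fact (Suc n) * f $ Suc n = fact n * fps_deriv f $ n"
  by (simp add: fps_deriv_nth algebra_simps del: of_nat_Suc)

lemma fact_mult_fps_mult_nth:
  fixes f g :: "'a::field_char_0 fps"
  shows "fact n * (f * g) $ n
    = (\<Sum>k=0..n. of_nat (n choose k) * (fact k * f $ k) * (fact (n - k) * g $ (n - k)))"
  unfolding fps_mult_nth sum_distrib_left
  by (intro sum.cong refl) (simp add: binomial_fact field_simps)

lemma gfall_Suc: "gfall c a (Suc n) = c * gfall (c - a) a n"
  unfolding gfall_def prod.lessThan_Suc_shift by (simp add: algebra_simps)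

lemma Efps_nth_0 [simp]: "Efps a c $ 0 = 1"
  by (simp add: Efps_def gfall_def)

lemma Efps_zero: "Efps a 0 = 1"
  unfolding Efps_def by (rule fps_ext) (auto simp: gfall_def prod.lessThan_Suc_shift split: nat.splits)

lemma fps_deriv_Efps: "fps_deriv (Efps a c) = fps_const c * Efps a (c - a)"
proof (rule fps_ext)
  fix n
  have "fps_deriv (Efps a c) $ n = of_nat (Suc n) * (gfall c a (Suc n) / fact (Suc n))"
    by (simp add: Efps_def)
  also have "\<dots> = c * (gfall (c - a) a n / fact n)"
    by (simp add: gfall_Suc field_simps del: of_nat_Suc)
  finally show "fps_deriv (Efps a c) $ n = (fps_const c * Efps a (c - a)) $ n"
    by (simp add: Efps_def)
qed

text \<open>Both sides solve \<open>F' = (b + c) F\<^sub>-\<^sub>\<alpha>\<close> with \<open>F(0) = 1\<close>; the induction runs over the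
  coefficient index, simultaneously for all \<open>b, c\<close>.\<close>
lemma Efps_mult: "Efps a b * Efps a c = Efps a (b + c)"
proof (rule fps_ext)
  fix n show "(Efps a b * Efps a c) $ n = Efps a (b + c) $ n"
  proof (induction n arbitrary: b c)
    case 0
    then show ?case by simp
  next
    case (Suc n)
    have "of_nat (Suc n) * (Efps a b * Efps a c) $ Suc n = fps_deriv (Efps a b * Efps a c) $ n"
      by (simp only: fps_deriv_nth Suc_eq_plus1)
    also have "\<dots> = c * (Efps a b * Efps a (c - a)) $ n + b * (Efps a (b - a) * Efps a c) $ n"
      by (simp add: fps_deriv_Efps mult.assoc mult.left_commute[of _ "fps_const c"])
    also have "\<dots> = (b + c) * Efps a (b + c - a) $ n"
      using Suc.IH by (simp add: algebra_simps)
    also have "\<dots> = of_nat (Suc n) * Efps a (b + c) $ Suc n"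
      using fps_deriv_nth[of "Efps a (b + c)" n] by (simp add: fps_deriv_Efps)
    finally show ?case
      by (metis mult_cancel_left of_nat_eq_0_iff nat.distinct(1))
  qed
qed

lemma fps_deriv_Tgf_1:
  "fps_deriv (Tgf 1 x a b g) = fps_const g * Tgf 1 x a b (g - a)
     + fps_const (x * b) * (Tgf 1 x a b (g + b - a) * Tgf 1 x a b 0)"
proof -
  define D where "D = 1 - fps_const x * (Efps a b - 1)"
  have D_nth_0: "D $ 0 \<noteq> 0" by (simp add: D_def)
  have fps_deriv_D: "fps_deriv D = - (fps_const x * (fps_const b * Efps a (b - a)))"
    by (simp add: D_def fps_deriv_Efps)
  have Tgf_eq: "Tgf 1 x a b c = Efps a c * inverse D" for c
    by (simp add: Tgf_def D_def)
  have "fps_deriv (Tgf 1 x a b g) = fps_const g * Efps a (g - a) * inverse D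
     + fps_const (x * b) * (Efps a g * Efps a (b - a)) * (inverse D)\<^sup>2"
    unfolding Tgf_eq
    by (simp add: fps_inverse_deriv[OF D_nth_0] fps_deriv_D fps_deriv_Efps algebra_simps fps_const_mult)
  also have "Efps a g * Efps a (b - a) = Efps a (g + b - a)"
    by (simp add: Efps_mult algebra_simps)
  finally show ?thesis
    unfolding Tgf_eq by (simp add: Efps_zero power2_eq_square algebra_simps)
qed

lemma T_1_Suc:
  "T 1 x (Suc n) a b g = g * T 1 x n a b (g - a)
     + x * b * (\<Sum>k=0..n. of_nat (n choose k) * T 1 x k a b (g + b - a) * T 1 x (n - k) a b 0)"
proof -
  have "T 1 x (Suc n) a b g = fact n * fps_deriv (Tgf 1 x a b g) $ n"
    unfolding T_def fact_Suc_mult_fps_nth ..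
  also have "\<dots> = g * T 1 x n a b (g - a)
      + x * b * (fact n * (Tgf 1 x a b (g + b - a) * Tgf 1 x a b 0) $ n)"
    unfolding fps_deriv_Tgf_1 fps_add_nth fps_mult_left_const_nth
    by (simp add: T_def algebra_simps)
  finally show ?thesis
    unfolding fact_mult_fps_mult_nth T_def .
qed

theorem theorem4:
  fixes \<alpha> \<beta> \<gamma> x :: nat and n :: nat
  assumes "(\<alpha>, \<beta>, \<gamma>, x) \<noteq> (0, 0, 0, 0)"
  shows "T 1 (of_nat x) (Suc n) (of_nat \<alpha>) (of_nat \<beta>) (of_nat \<gamma>)
    = of_nat \<gamma> * T 1 (of_nat x) n (of_nat \<alpha>) (of_nat \<beta>) (of_nat \<gamma> - of_nat \<alpha>)
      + of_nat x * of_nat \<beta> *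
        (\<Sum>k=0..n. of_nat (n choose k)
           * T 1 (of_nat x) k (of_nat \<alpha>) (of_nat \<beta>) (of_nat \<gamma> + of_nat \<beta> - of_nat \<alpha>)
           * T 1 (of_nat x) (n - k) (of_nat \<alpha>) (of_nat \<beta>) 0)"
  by (rule T_1_Suc)

end
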